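(* Let $\mathcal{G}^{\mathrm{aff}}$ be the family of all routing problems with affine latency functions, with homogeneous users. For a bound $\beta\ge0$, an optimal $\beta$-bounded tolling mechanism is $$T^{\mathrm{opt}+}(af+b;\beta)=\begin{cases}\beta a f & \beta\in[0,1),\\ a f & \beta\ge1,\end{cases}$$ with $$\mathrm{PoA}\big(\mathcal{G}^{\mathrm{aff}},T^{\mathrm{opt}+}(\beta)\big)=\begin{cases}\dfrac{4}{3+2\beta-\beta^2} & \beta\in[0,1),\\ 1 & \beta\ge1.\end{cases}$$ An optimal $\beta$-bounded subsidy mechanism is $$T^{\mathrm{opt}-}(af+b;\beta)=\begin{cases}-\beta b & \beta\in[0,1/2),\\ -b/2 & \beta\ge1/2,\end{cases}$$ with $$\mathrm{PoA}\big(\mathcal{G}^{\mathrm{aff}},T^{\mathrm{opt}-}(\beta)\big)=\begin{cases}\dfrac{4}{3+2\hat\beta-\hat\beta^2} & \beta\in[0,1/2),\\ 1 & \beta\ge1/2,\end{cases}\qquad \hat\beta=\frac{1}{1-\beta}-1.$$ Consequently, for every $\beta\in(0,1)$, $\mathrm{PoA}(\mathcal{G}^{\mathrm{aff}},T^{\mathrm{opt}+}(\beta))>\mathrm{PoA}(\mathcal{G}^{\mathrm{aff}},T^{\mathrm{opt}-}(\beta))$.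
   Context: A routing problem $G$ consists of a directed graph $(V,E)$, origin–destination pairs $(o_i,d_i)$ with traffic masses $r_i>0$, $\sum_ir_i=1$, and for each edge $e$ a latency function $\ell_e$; in $\mathcal{G}^{\mathrm{aff}}$ every latency has the form $\ell(f)=af+b$ with $a,b\ge0$, and $L(\mathcal{G}^{\mathrm{aff}})$ is the set of all such functions. Let $\mathcal{P}_i$ be the set of simple $o_i$–$d_i$ paths. A flow assigns mass $f_P\ge0$ to each path, is feasible if $\sum_{P\in\mathcal{P}_i}f_P=r_i$, and has edge flows $f_e=\sum_{P\ni e}f_P$; its total latency is $\mathcal{L}(f)=\sum_ef_e\ell_e(f_e)$ and $\mathcal{L}^{\mathrm{opt}}(G)$ is the minimum over feasible flows. Users form a continuum $N=\bigcup_iN_i$ of disjoint intervals of Lebesgue measure $r_i$, choosing paths in $\mathcal{P}_i$; users are homogeneous (sensitivity $1$). An incentive mechanism $T$ assigns to each latency $\ell$ a function $T(\ell):[0,1]\to\mathbb{R}$, and edge $e$ receives $\tau_e=T(\ell_e)$. A user on path $P$ under flow $f$ has cost $\sum_{e\in P}(\ell_e(f_e)+\tau_e(f_e))$; a Nash flow is a feasible flow in which every user uses a cost-minimizing path. $\mathcal{L}^{\mathrm{Nash}}(G,T)$ is the highest total latency of a Nash flow and $\mathrm{PoA}(\mathcal{G},T)=\sup_{G\in\mathcal{G}}\mathcal{L}^{\mathrm{Nash}}(G,T)/\mathcal{L}^{\mathrm{opt}}(G)$. A $\beta$-bounded tolling mechanism satisfies $T(\ell)[f]\in[0,\beta\ell(f)]$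 for all $f\in[0,1]$; a $\beta$-bounded subsidy mechanism satisfies $T(\ell)[f]\in[-\beta\ell(f),0]$. An optimal $\beta$-bounded tolling (subsidy) mechanism is one minimizing $\mathrm{PoA}(\mathcal{G}^{\mathrm{aff}},\cdot)$ over all $\beta$-bounded tolling (subsidy) mechanisms. *)

theory Defs
  imports Complex_Main "HOL-Library.Extended_Real"
begin

text \<open>Vertices and edges are labelled by natural numbers
(this covers every finite directed multigraph up to isomorphism). Commodities are indexed by i < ncom.\<close>

record routing_problem =
  edges :: "nat set"
  src   :: "nat \<Rightarrow> nat"
  dst   :: "nat \<Rightarrow> nat"
  ncom  :: nat
  orig  :: "nat \<Rightarrow> nat"
  dest  :: "nat \<Rightarrow> nat"
  rate  :: "nat \<Rightarrow> real"
  lat   :: "nat \<Rightarrow> real \<Rightarrow> real"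

definition simple_path :: "routing_problem \<Rightarrow> nat \<Rightarrow> nat \<Rightarrow> nat list \<Rightarrow> bool" where
  "simple_path G o' d P \<longleftrightarrow>
     set P \<subseteq> edges G \<and> distinct (o' # map (dst G) P) \<and>
     (P = [] \<longrightarrow> o' = d) \<and>
     (P \<noteq> [] \<longrightarrow> src G (hd P) = o' \<and> dst G (last P) = d) \<and>
     (\<forall>j. Suc j < length P \<longrightarrow> dst G (P ! j) = src G (P ! Suc j))"

definition paths :: "routing_problem \<Rightarrow> nat \<Rightarrow> nat list set" where
  "paths G i = {P. simple_path G (orig G i) (dest G i) P}"

definition wf_rp :: "routing_problem \<Rightarrow> bool" where
  "wf_rp G \<longleftrightarrow> finite (edges G) \<and>
     (\<forall>i<ncom G. rate G i > 0) \<and> (\<Sum>i<ncom G. rate G i) = 1 \<and>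
     (\<forall>i<ncom G. paths G i \<noteq> {})"

definition affine_lats :: "(real \<Rightarrow> real) set" where
  "affine_lats = {l. \<exists>a b. a \<ge> 0 \<and> b \<ge> 0 \<and> l = (\<lambda>x. a * x + b)}"

definition affine_rp :: "routing_problem \<Rightarrow> bool" where
  "affine_rp G \<longleftrightarrow> (\<forall>e\<in>edges G. lat G e \<in> affine_lats)"

definition G_aff :: "routing_problem set" where
  "G_aff = {G. wf_rp G \<and> affine_rp G}"

text \<open>Flows: f i P is the mass of commodity i on path P.\<close>
type_synonym flow = "nat \<Rightarrow> nat list \<Rightarrow> real"

definition feasible :: "routing_problem \<Rightarrow> flow \<Rightarrow> bool" where
  "feasible G f \<longleftrightarrow> (\<forall>i<ncom G. (\<forall>P. f i P \<ge> 0) \<and> (\<forall>P. P \<notin> paths G i \<longrightarrow> f i P = 0)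
      \<and> (\<Sum>P\<in>paths G i. f i P) = rate G i)"

definition edge_flow :: "routing_problem \<Rightarrow> flow \<Rightarrow> nat \<Rightarrow> real" where
  "edge_flow G f e = (\<Sum>i<ncom G. \<Sum>P\<in>{P\<in>paths G i. e \<in> set P}. f i P)"

definition total_latency :: "routing_problem \<Rightarrow> flow \<Rightarrow> real" where
  "total_latency G f = (\<Sum>e\<in>edges G. edge_flow G f e * lat G e (edge_flow G f e))"

definition L_opt :: "routing_problem \<Rightarrow> real" where
  "L_opt G = Inf (total_latency G ` {f. feasible G f})"

text \<open>Incentive mechanism: maps a latency function to a toll/subsidy function.\<close>
type_synonym mechanism = "(real \<Rightarrow> real) \<Rightarrow> (real \<Rightarrow> real)"

definition path_cost :: "routing_problem \<Rightarrow> mechanism \<Rightarrow> flow \<Rightarrow> nat list \<Rightarrow> real" where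
  "path_cost G T f P =
     sum_list (map (\<lambda>e. lat G e (edge_flow G f e) + T (lat G e) (edge_flow G f e)) P)"

definition nash :: "routing_problem \<Rightarrow> mechanism \<Rightarrow> flow \<Rightarrow> bool" where
  "nash G T f \<longleftrightarrow> feasible G f \<and>
     (\<forall>i<ncom G. \<forall>P\<in>paths G i. f i P > 0 \<longrightarrow>
        (\<forall>Q\<in>paths G i. path_cost G T f P \<le> path_cost G T f Q))"

text \<open>Highest total latency of a Nash flow (convention: \<infinity> if no Nash flow exists).\<close>
definition L_nash :: "routing_problem \<Rightarrow> mechanism \<Rightarrow> ereal" where
  "L_nash G T = (if {f. nash G T f} = {} then \<infinity>
                 else (SUP f\<in>{f. nash G T f}. ereal (total_latency G f)))"

text \<open>Ratio with conventions 0/0 = 1 and x/0 = \<infinity> for x > 0.\<close>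
definition ratio :: "ereal \<Rightarrow> real \<Rightarrow> ereal" where
  "ratio x y = (if y = 0 then (if x = 0 then 1 else \<infinity>) else x / ereal y)"

definition PoA :: "routing_problem set \<Rightarrow> mechanism \<Rightarrow> ereal" where
  "PoA \<G> T = (SUP G\<in>\<G>. ratio (L_nash G T) (L_opt G))"

definition tolling_bounded :: "real \<Rightarrow> mechanism \<Rightarrow> bool" where
  "tolling_bounded \<beta> T \<longleftrightarrow>
     (\<forall>l\<in>affine_lats. \<forall>x\<in>{0..1}. 0 \<le> T l x \<and> T l x \<le> \<beta> * l x)"

definition subsidy_bounded :: "real \<Rightarrow> mechanism \<Rightarrow> bool" where
  "subsidy_bounded \<beta> T \<longleftrightarrow>
     (\<forall>l\<in>affine_lats. \<forall>x\<in>{0..1}. - \<beta> * l x \<le> T l x \<and> T l x \<le> 0)"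

definition optimal_tolling :: "real \<Rightarrow> mechanism \<Rightarrow> bool" where
  "optimal_tolling \<beta> T \<longleftrightarrow> tolling_bounded \<beta> T \<and>
     (\<forall>T'. tolling_bounded \<beta> T' \<longrightarrow> PoA G_aff T \<le> PoA G_aff T')"

definition optimal_subsidy :: "real \<Rightarrow> mechanism \<Rightarrow> bool" where
  "optimal_subsidy \<beta> T \<longleftrightarrow> subsidy_bounded \<beta> T \<and>
     (\<forall>T'. subsidy_bounded \<beta> T' \<longrightarrow> PoA G_aff T \<le> PoA G_aff T')"

text \<open>For an affine latency l(f) = a f + b we have a = l 1 - l 0 and b = l 0.\<close>
definition T_opt_plus :: "real \<Rightarrow> mechanism" where
  "T_opt_plus \<beta> l = (\<lambda>x. (if \<beta> < 1 then \<beta> * (l 1 - l 0) * x else (l 1 - l 0) * x))"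

definition T_opt_minus :: "real \<Rightarrow> mechanism" where
  "T_opt_minus \<beta> l = (\<lambda>x. (if \<beta> < 1/2 then - \<beta> * l 0 else - l 0 / 2))"

end

theory Submission
  imports Defs "HOL-Analysis.Analysis"
begin

text \<open>
  For an affine latency \<open>a x + b\<close>, both \<open>T_opt_plus \<beta>\<close> and \<open>T_opt_minus \<beta>\<close> make the cost
  perceived on an edge a positive multiple of \<open>a (1 + \<gamma>) x + b\<close>, with \<open>\<gamma> = min \<beta> 1\<close> for tolls
  and \<open>\<gamma> = 1 / (1 - \<beta>) - 1\<close> (capped at \<open>1\<close>) for subsidies. The resulting game has the Beckmann
  potential, whose minimiser over the compact polytope of feasible flows is a Nash flow. The
  variational inequality of a Nash flow, combined edge by edge with
  \<open>F (a F + b) - \<rho> H (a H + b) \<le> \<rho> (a (1 + \<gamma>) F + b) (F - H)\<close> for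
  \<open>\<rho> = 4 / ((1 + \<gamma>) (3 - \<gamma>))\<close>, bounds the price of anarchy by \<open>\<rho>\<close>. Conversely, in the Pigou network
  with latencies \<open>x\<close> and \<open>1 + \<gamma>\<close> every \<open>\<beta>\<close>-bounded toll (resp. subsidy) keeps the flow using only
  the first edge at equilibrium, and that flow attains the ratio \<open>\<rho>\<close>; so no admissible mechanism
  does better (when \<open>\<gamma> = 1\<close> the optimum \<open>\<rho> = 1\<close> is reached anyway). Since \<open>1 / (1 - \<beta>) - 1 > \<beta>\<close> and \<open>\<rho>\<close> decreases in \<open>\<gamma>\<close>, subsidies beat tolls.
\<close>

lemma set_path_subset_edges: "P \<in> paths G i \<Longrightarrow> set P \<subseteq> edges G"
  by (simp add: paths_def Defs.simple_path_def)

lemma distinct_path: "P \<in> paths G i \<Longrightarrow> distinct P"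
  by (auto simp: paths_def Defs.simple_path_def dest: distinct_map[THEN iffD1])

lemma finite_paths:
  assumes "finite (edges G)"
  shows "finite (paths G i)"
proof (rule finite_subset)
  show "paths G i \<subseteq> {xs. set xs \<subseteq> edges G \<and> length xs \<le> card (edges G)}"
  proof (rule subsetI, unfold mem_Collect_eq, rule conjI)
    fix P assume P: "P \<in> paths G i"
    show "set P \<subseteq> edges G" using P by (rule set_path_subset_edges)
    have "length P = card (set P)" using distinct_card[OF distinct_path[OF P]] by simp
    also have "\<dots> \<le> card (edges G)" using set_path_subset_edges[OF P] card_mono[OF assms] by blast
    finally show "length P \<le> card (edges G)" .
  qed
  show "finite {xs. set xs \<subseteq> edges G \<and> length xs \<le> card (edges G)}"
    using finite_lists_length_le[OF assms] by simp
qed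

definition edge_cost :: "routing_problem \<Rightarrow> mechanism \<Rightarrow> flow \<Rightarrow> nat \<Rightarrow> real" where
  "edge_cost G T f e = lat G e (edge_flow G f e) + T (lat G e) (edge_flow G f e)"

lemma path_cost_eq_sum_edge_cost:
  "P \<in> paths G i \<Longrightarrow> path_cost G T f P = (\<Sum>e\<in>set P. edge_cost G T f e)"
  by (simp add: path_cost_def edge_cost_def distinct_path sum_list_distinct_conv_sum_set)

lemma sum_subset_eq_sum_indicator:
  fixes c :: "'a \<Rightarrow> 'b::comm_ring_1"
  assumes "finite E" "S \<subseteq> E"
  shows "sum c S = (\<Sum>e\<in>E. of_bool (e \<in> S) * c e)"
  using assms by (simp add: Int_absorb1)

lemma edge_flow_add_scaled:
  "edge_flow G (\<lambda>i P. f i P + c * g i P) e = edge_flow G f e + c * edge_flow G g e"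
  by (simp add: edge_flow_def sum.distrib sum_distrib_left)

lemma edge_flow_diff:
  "edge_flow G (\<lambda>i P. f i P - g i P) e = edge_flow G f e - edge_flow G g e"
  by (simp add: edge_flow_def sum_subtractf)

lemma edge_flow_nonneg: "feasible G f \<Longrightarrow> 0 \<le> edge_flow G f e"
  unfolding edge_flow_def feasible_def by (auto intro!: sum_nonneg)

lemma edge_flow_eq_sum_indicator:
  assumes "finite (edges G)"
  shows "edge_flow G h e = (\<Sum>i<ncom G. \<Sum>P\<in>paths G i. of_bool (e \<in> set P) * h i P)"
  unfolding edge_flow_def using finite_paths[OF assms] by (simp add: Int_def)

lemma sum_path_flows_eq_sum_edge_flows:
  assumes fin: "finite (edges G)"
  shows "(\<Sum>i<ncom G. \<Sum>P\<in>paths G i. h i P * (\<Sum>e\<in>set P. w e))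
       = (\<Sum>e\<in>edges G. w e * edge_flow G h e)"
proof -
  have "h i P * (\<Sum>e\<in>set P. w e) = (\<Sum>e\<in>edges G. w e * (of_bool (e \<in> set P) * h i P))"
    if "P \<in> paths G i" for i P
    using sum_subset_eq_sum_indicator[OF fin set_path_subset_edges[OF that], of w]
    by (simp add: sum_distrib_left mult.commute mult.left_commute)
  then have "(\<Sum>i<ncom G. \<Sum>P\<in>paths G i. h i P * (\<Sum>e\<in>set P. w e))
      = (\<Sum>i<ncom G. \<Sum>P\<in>paths G i. \<Sum>e\<in>edges G. w e * (of_bool (e \<in> set P) * h i P))"
    by (intro sum.cong refl) simp
  also have "\<dots> = (\<Sum>e\<in>edges G. w e * (\<Sum>i<ncom G. \<Sum>P\<in>paths G i. of_bool (e \<in> set P) * h i P))"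
    by (simp only: sum.swap[of _ "edges G"] sum_distrib_left)
  also have "\<dots> = (\<Sum>e\<in>edges G. w e * edge_flow G h e)"
    by (simp only: edge_flow_eq_sum_indicator[OF fin])
  finally show ?thesis .
qed

section \<open>Existence of Nash flows\<close>

definition unit_flow :: "nat \<Rightarrow> nat list \<Rightarrow> flow" where
  "unit_flow i Q = (\<lambda>i' P. of_bool (i' = i \<and> P = Q))"

lemma edge_flow_unit_flow:
  assumes "i < ncom G" "Q \<in> paths G i" "finite (edges G)"
  shows "edge_flow G (unit_flow i Q) e = of_bool (e \<in> set Q)"
proof -
  have "(\<Sum>P\<in>{P \<in> paths G i'. e \<in> set P}. unit_flow i Q i' P) = of_bool (i' = i \<and> e \<in> set Q)"
    for i'
    using assms finite_paths[OF assms(3), of i'] by (cases "i' = i") (auto simp: unit_flow_def)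
  then show ?thesis
    using assms(1) by (cases "e \<in> set Q") (simp_all add: edge_flow_def of_bool_def)
qed

lemma sum_paths_unit_flow:
  assumes "Q \<in> paths G i" "finite (edges G)"
  shows "(\<Sum>P\<in>paths G i'. unit_flow i Q i' P) = of_bool (i' = i)"
  using assms finite_paths[OF assms(2)] by (auto simp: unit_flow_def)

definition reroute :: "flow \<Rightarrow> nat \<Rightarrow> nat list \<Rightarrow> nat list \<Rightarrow> real \<Rightarrow> flow" where
  "reroute f i P Q \<epsilon> = (\<lambda>i' P'. f i' P' + \<epsilon> * (unit_flow i Q i' P' - unit_flow i P i' P'))"

lemma edge_flow_reroute:
  assumes "finite (edges G)" "i < ncom G" "P \<in> paths G i" "Q \<in> paths G i"
  shows "edge_flow G (reroute f i P Q \<epsilon>) e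
       = edge_flow G f e + \<epsilon> * (of_bool (e \<in> set Q) - of_bool (e \<in> set P))"
  using assms by (simp add: reroute_def edge_flow_add_scaled edge_flow_diff edge_flow_unit_flow)

text \<open>Flows of the nonexistent commodities \<open>i \<ge> ncom G\<close> are forced to vanish, so that the
  feasible flows form a compact set in the product topology of \<^typ>\<open>flow\<close>.\<close>

definition flow_polytope :: "routing_problem \<Rightarrow> flow set" where
  "flow_polytope G = {f. feasible G f \<and> (\<forall>i P. ncom G \<le> i \<longrightarrow> f i P = 0)}"

lemma flow_polytope_nonempty:
  assumes "wf_rp G"
  shows "flow_polytope G \<noteq> {}"
proof -
  define f where
    "f = (\<lambda>i P. if i < ncom G \<and> P = (SOME P. P \<in> paths G i) then rate G i else 0)"
  have "f \<in> flow_polytope G"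
    unfolding flow_polytope_def feasible_def mem_Collect_eq
  proof (intro allI impI conjI)
    fix i P assume i: "i < ncom G"
    then have some: "(SOME P. P \<in> paths G i) \<in> paths G i" and "rate G i > 0"
      using assms by (auto simp: wf_rp_def some_in_eq)
    then show "0 \<le> f i P" and "P \<notin> paths G i \<Longrightarrow> f i P = 0"
      by (auto simp: f_def)
    show "(\<Sum>P\<in>paths G i. f i P) = rate G i"
      using i some finite_paths assms by (simp add: f_def wf_rp_def sum.delta')
  qed (simp add: f_def)
  then show ?thesis by blast
qed

lemma feasible_le_1:
  assumes "wf_rp G" "feasible G f" "i < ncom G"
  shows "f i P \<le> 1"
proof (cases "P \<in> paths G i")
  case True
  have "f i P \<le> (\<Sum>P\<in>paths G i. f i P)"
    using assms True finite_paths by (intro member_le_sum) (auto simp: feasible_def wf_rp_def)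
  also have "\<dots> = rate G i" using assms by (simp add: feasible_def)
  also have "\<dots> \<le> (\<Sum>i<ncom G. rate G i)"
    using assms by (intro member_le_sum) (auto simp: wf_rp_def less_imp_le)
  also have "\<dots> = 1" using assms by (simp add: wf_rp_def)
  finally show ?thesis .
next
  case False
  then show ?thesis using assms by (simp add: feasible_def)
qed

lemma continuous_on_flow_coordinate [continuous_intros]:
  "continuous_on S (\<lambda>f::flow. f i P)"
  by (rule continuous_on_product_then_coordinatewise
      [OF continuous_on_product_then_coordinatewise[OF continuous_on_id]])

lemma continuous_on_edge_flow [continuous_intros]: "continuous_on S (\<lambda>f. edge_flow G f e)"
  unfolding edge_flow_def by (intro continuous_intros)

lemma closed_flow_polytope: "closed (flow_polytope G)"
proof -
  have "flow_polytope G =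
      (\<Inter>i<ncom G. \<Inter>P. {f. 0 \<le> f i P}) \<inter>
      (\<Inter>i<ncom G. \<Inter>P\<in>- paths G i. {f. f i P = 0}) \<inter>
      (\<Inter>i<ncom G. {f. (\<Sum>P\<in>paths G i. f i P) = rate G i}) \<inter>
      (\<Inter>i\<in>{ncom G..}. \<Inter>P. {f. f i P = 0})"
    unfolding flow_polytope_def feasible_def by (auto simp: not_less)
  also have "closed \<dots>"
    by (intro closed_Int closed_INT ballI closed_Collect_le closed_Collect_eq
        continuous_on_const continuous_on_flow_coordinate continuous_on_sum)
  finally show ?thesis .
qed

lemma compact_unit_box_flows: "compact {f::flow. \<forall>i P. f i P \<in> {0..1}}"
proof -
  have "compact (PiE UNIV (\<lambda>P::nat list. {0..1::real}))"
    using compactin_PiE[of "\<lambda>_. euclidean" UNIV "\<lambda>P::nat list. {0..1::real}"]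
    by (simp add: euclidean_product_topology compactin_euclidean_iff)
  then have "compact (PiE UNIV (\<lambda>i::nat. PiE UNIV (\<lambda>P::nat list. {0..1::real})))"
    using compactin_PiE[of "\<lambda>_. euclidean" UNIV "\<lambda>i::nat. PiE UNIV (\<lambda>P::nat list. {0..1::real})"]
    by (simp add: euclidean_product_topology compactin_euclidean_iff)
  moreover have "PiE UNIV (\<lambda>i::nat. PiE UNIV (\<lambda>P::nat list. {0..1::real}))
      = {f::flow. \<forall>i P. f i P \<in> {0..1}}"
    by (auto simp: PiE_def Pi_def extensional_def)
  ultimately show ?thesis by simp
qed

lemma compact_flow_polytope:
  assumes "wf_rp G"
  shows "compact (flow_polytope G)"
proof -
  have "f i P \<in> {0..1}" if "f \<in> flow_polytope G" for f i P
    using that feasible_le_1[OF assms, of f i P]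
    by (cases "i < ncom G") (auto simp: flow_polytope_def feasible_def)
  then have "flow_polytope G \<subseteq> {f::flow. \<forall>i P. f i P \<in> {0..1}}"
    by blast
  then have "flow_polytope G = {f::flow. \<forall>i P. f i P \<in> {0..1}} \<inter> flow_polytope G"
    by blast
  also have "compact \<dots>"
    by (rule compact_Int_closed[OF compact_unit_box_flows closed_flow_polytope])
  finally show ?thesis .
qed

definition beckmann_potential ::
    "routing_problem \<Rightarrow> (nat \<Rightarrow> real) \<Rightarrow> (nat \<Rightarrow> real) \<Rightarrow> flow \<Rightarrow> real" where
  "beckmann_potential G \<alpha> \<beta> f =
     (\<Sum>e\<in>edges G. \<alpha> e / 2 * (edge_flow G f e)\<^sup>2 + \<beta> e * edge_flow G f e)"

lemma beckmann_potential_reroute: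
  assumes fin: "finite (edges G)" and i: "i < ncom G" and P: "P \<in> paths G i" and Q: "Q \<in> paths G i"
  shows "beckmann_potential G \<alpha> \<beta> (reroute f i P Q \<epsilon>)
       = beckmann_potential G \<alpha> \<beta> f
         + \<epsilon> * ((\<Sum>e\<in>set Q. \<alpha> e * edge_flow G f e + \<beta> e) - (\<Sum>e\<in>set P. \<alpha> e * edge_flow G f e + \<beta> e))
         + \<epsilon>\<^sup>2 * (\<Sum>e\<in>edges G. \<alpha> e / 2 * (of_bool (e \<in> set Q) - of_bool (e \<in> set P))\<^sup>2)"
proof -
  define F where "F e = edge_flow G f e" for e
  define d :: "nat \<Rightarrow> real" where "d e = of_bool (e \<in> set Q) - of_bool (e \<in> set P)" for e
  have rerouted: "edge_flow G (reroute f i P Q \<epsilon>) e = F e + \<epsilon> * d e" for e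
    by (simp add: edge_flow_reroute[OF fin i P Q] F_def d_def)
  have "(\<Sum>e\<in>set Q. \<alpha> e * F e + \<beta> e) - (\<Sum>e\<in>set P. \<alpha> e * F e + \<beta> e)
      = (\<Sum>e\<in>edges G. d e * (\<alpha> e * F e + \<beta> e))"
    using sum_subset_eq_sum_indicator[OF fin set_path_subset_edges[OF Q], of "\<lambda>e. \<alpha> e * F e + \<beta> e"]
      sum_subset_eq_sum_indicator[OF fin set_path_subset_edges[OF P], of "\<lambda>e. \<alpha> e * F e + \<beta> e"]
    by (simp add: d_def left_diff_distrib sum_subtractf)
  moreover have "\<alpha> e / 2 * (F e + \<epsilon> * d e)\<^sup>2 + \<beta> e * (F e + \<epsilon> * d e)
      = (\<alpha> e / 2 * (F e)\<^sup>2 + \<beta> e * F e) + \<epsilon> * (d e * (\<alpha> e * F e + \<beta> e)) + \<epsilon>\<^sup>2 * (\<alpha> e / 2 * (d e)\<^sup>2)"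
    for e
    by (simp add: algebra_simps power2_eq_square)
  ultimately show ?thesis
    unfolding beckmann_potential_def rerouted F_def[symmetric] d_def[symmetric]
    by (simp add: sum.distrib sum_distrib_left)
qed

lemma reroute_mem_flow_polytope:
  assumes f: "f \<in> flow_polytope G" and fin: "finite (edges G)" and i: "i < ncom G"
    and P: "P \<in> paths G i" and Q: "Q \<in> paths G i" and "P \<noteq> Q" and "0 \<le> \<epsilon>" "\<epsilon> \<le> f i P"
  shows "reroute f i P Q \<epsilon> \<in> flow_polytope G"
  unfolding flow_polytope_def feasible_def mem_Collect_eq reroute_def
proof (intro allI impI conjI)
  fix i' P' assume i': "i' < ncom G"
  have "0 \<le> f i' P'" using f i' by (simp add: flow_polytope_def feasible_def)
  then show "0 \<le> f i' P' + \<epsilon> * (unit_flow i Q i' P' - unit_flow i P i' P')"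
    using assms by (auto simp: unit_flow_def)
  show "P' \<notin> paths G i' \<Longrightarrow> f i' P' + \<epsilon> * (unit_flow i Q i' P' - unit_flow i P i' P') = 0"
    using f i' P Q by (auto simp: unit_flow_def flow_polytope_def feasible_def)
  show "(\<Sum>P'\<in>paths G i'. f i' P' + \<epsilon> * (unit_flow i Q i' P' - unit_flow i P i' P')) = rate G i'"
    using f i' by (simp add: sum.distrib sum_subtractf flip: sum_distrib_left)
      (simp add: sum_paths_unit_flow[OF P fin] sum_paths_unit_flow[OF Q fin] flow_polytope_def
        feasible_def)
next
  fix i' P' assume "ncom G \<le> i'"
  then show "f i' P' + \<epsilon> * (unit_flow i Q i' P' - unit_flow i P i' P') = 0"
    using f i by (auto simp: unit_flow_def flow_polytope_def)
qed

lemma exists_small_descent: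
  fixes D M c :: real
  assumes "D < 0" "0 \<le> M" "0 < c"
  shows "\<exists>\<epsilon>>0. \<epsilon> \<le> c \<and> \<epsilon> * D + \<epsilon>\<^sup>2 * M < 0"
proof (intro exI conjI)
  define \<epsilon> where "\<epsilon> = min c (- D / (M + 1))"
  have "0 < - D / (M + 1)" using assms by (intro divide_pos_pos) auto
  then show "0 < \<epsilon>" "\<epsilon> \<le> c" using assms by (simp_all add: \<epsilon>_def)
  have "\<epsilon> * M \<le> - D / (M + 1) * M"
    using assms by (intro mult_right_mono) (auto simp: \<epsilon>_def)
  also have "\<dots> < - D" using assms by (simp add: field_simps)
  finally have "\<epsilon> * (D + \<epsilon> * M) < 0"
    using \<open>0 < \<epsilon>\<close> by (intro mult_pos_neg) auto
  then show "\<epsilon> * D + \<epsilon>\<^sup>2 * M < 0"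
    by (simp add: algebra_simps power2_eq_square)
qed

lemma beckmann_minimizer_is_nash:
  assumes fin: "finite (edges G)"
    and cost: "\<forall>e\<in>edges G. 0 \<le> \<alpha> e \<and> (\<forall>x. lat G e x + T (lat G e) x = \<alpha> e * x + \<beta> e)"
    and f: "f \<in> flow_polytope G"
    and min: "\<forall>g\<in>flow_polytope G. beckmann_potential G \<alpha> \<beta> f \<le> beckmann_potential G \<alpha> \<beta> g"
  shows "nash G T f"
  unfolding nash_def
proof (intro conjI allI impI ballI)
  show "feasible G f" using f by (simp add: flow_polytope_def)
  fix i P Q assume i: "i < ncom G" and P: "P \<in> paths G i" and pos: "0 < f i P" and Q: "Q \<in> paths G i"
  have cost_eq: "path_cost G T f R = (\<Sum>e\<in>set R. \<alpha> e * edge_flow G f e + \<beta> e)"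
    if "R \<in> paths G i" for R
    unfolding path_cost_eq_sum_edge_cost[OF that] edge_cost_def
    using cost set_path_subset_edges[OF that] by (intro sum.cong) auto
  show "path_cost G T f P \<le> path_cost G T f Q"
  proof (rule ccontr)
    define D where "D = path_cost G T f Q - path_cost G T f P"
    define M where "M = (\<Sum>e\<in>edges G. \<alpha> e / 2 * (of_bool (e \<in> set Q) - of_bool (e \<in> set P))\<^sup>2)"
    assume "\<not> path_cost G T f P \<le> path_cost G T f Q"
    then have "D < 0" and "P \<noteq> Q" by (auto simp: D_def)
    moreover have "0 \<le> M" unfolding M_def using cost by (intro sum_nonneg) auto
    ultimately obtain \<epsilon> where \<epsilon>: "0 < \<epsilon>" "\<epsilon> \<le> f i P" and descent: "\<epsilon> * D + \<epsilon>\<^sup>2 * M < 0"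
      using exists_small_descent pos by blast
    have "beckmann_potential G \<alpha> \<beta> (reroute f i P Q \<epsilon>)
        = beckmann_potential G \<alpha> \<beta> f + \<epsilon> * D + \<epsilon>\<^sup>2 * M"
      unfolding beckmann_potential_reroute[OF fin i P Q] D_def M_def cost_eq[OF P] cost_eq[OF Q] ..
    moreover have "reroute f i P Q \<epsilon> \<in> flow_polytope G"
      using \<epsilon> \<open>P \<noteq> Q\<close> by (intro reroute_mem_flow_polytope[OF f fin i P Q]) auto
    ultimately show False using min descent by force
  qed
qed

theorem nash_exists:
  assumes wf: "wf_rp G"
    and cost: "\<forall>e\<in>edges G. 0 \<le> \<alpha> e \<and> (\<forall>x. lat G e x + T (lat G e) x = \<alpha> e * x + \<beta> e)"
  shows "\<exists>f. nash G T f"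
proof -
  have "continuous_on (flow_polytope G) (beckmann_potential G \<alpha> \<beta>)"
    unfolding beckmann_potential_def by (intro continuous_intros)
  then obtain f where "f \<in> flow_polytope G"
    and "\<forall>g\<in>flow_polytope G. beckmann_potential G \<alpha> \<beta> f \<le> beckmann_potential G \<alpha> \<beta> g"
    using continuous_attains_inf[OF compact_flow_polytope[OF wf] flow_polytope_nonempty[OF wf]]
    by blast
  then show ?thesis
    using beckmann_minimizer_is_nash[OF _ cost] wf by (auto simp: wf_rp_def)
qed

section \<open>Upper bound on the price of anarchy\<close>

lemma nash_weighted_path_cost_le:
  assumes fin: "finite (edges G)" and N: "nash G T f" and g: "feasible G g" and i: "i < ncom G"
  shows "(\<Sum>P\<in>paths G i. f i P * path_cost G T f P) \<le> (\<Sum>P\<in>paths G i. g i P * path_cost G T f P)"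
proof (cases "paths G i = {}")
  case False
  define C where "C = path_cost G T f"
  have f: "feasible G f" using N by (simp add: nash_def)
  obtain P0 where P0: "P0 \<in> paths G i" and min: "\<forall>P\<in>paths G i. C P0 \<le> C P"
    using finite_paths[OF fin] False by (metis arg_min_if_finite(1,2) not_less)
  have "f i P * C P = f i P * C P0" if P: "P \<in> paths G i" for P
  proof (cases "f i P > 0")
    case True
    then have "C P \<le> C P0" using N i P P0 by (auto simp: nash_def C_def)
    then show ?thesis using min P by (simp add: order_antisym)
  next
    case False
    then show ?thesis using f i by (auto simp: feasible_def intro: antisym)
  qed
  then have "(\<Sum>P\<in>paths G i. f i P * C P) = (\<Sum>P\<in>paths G i. f i P) * C P0"
    unfolding sum_distrib_right by (rule sum.cong[OF refl])
  also have "\<dots> = (\<Sum>P\<in>paths G i. g i P) * C P0"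
    using f g i by (simp add: feasible_def)
  also have "\<dots> \<le> (\<Sum>P\<in>paths G i. g i P * C P)"
    unfolding sum_distrib_right using g i min by (intro sum_mono mult_left_mono) (auto simp: feasible_def)
  finally show ?thesis by (simp add: C_def)
qed simp

lemma nash_variational_inequality:
  assumes fin: "finite (edges G)" and N: "nash G T f" and g: "feasible G g"
  shows "(\<Sum>e\<in>edges G. edge_cost G T f e * edge_flow G f e)
       \<le> (\<Sum>e\<in>edges G. edge_cost G T f e * edge_flow G g e)"
proof -
  have "(\<Sum>i<ncom G. \<Sum>P\<in>paths G i. f i P * (\<Sum>e\<in>set P. edge_cost G T f e))
      \<le> (\<Sum>i<ncom G. \<Sum>P\<in>paths G i. g i P * (\<Sum>e\<in>set P. edge_cost G T f e))"
    by (rule sum_mono)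
      (use nash_weighted_path_cost_le[OF fin N g] in \<open>simp add: path_cost_eq_sum_edge_cost\<close>)
  then show ?thesis
    unfolding sum_path_flows_eq_sum_edge_flows[OF fin] by (simp add: mult.commute)
qed

text \<open>\<open>poa_bound 0 = 4 / 3\<close> is the price of anarchy of untolled affine routing, and
  \<open>poa_bound 1 = 1\<close> reflects that marginal-cost tolls \<open>a x\<close> enforce the optimum.\<close>

definition poa_bound :: "real \<Rightarrow> real" where
  "poa_bound \<gamma> = 4 / ((1 + \<gamma>) * (3 - \<gamma>))"

lemma poa_bound_ge_1:
  assumes "0 \<le> \<gamma>" "\<gamma> \<le> 1"
  shows "1 \<le> poa_bound \<gamma>"
proof -
  have "(1 + \<gamma>) * (3 - \<gamma>) = 4 - (1 - \<gamma>)\<^sup>2"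
    by (simp add: algebra_simps power2_eq_square)
  moreover have "(1 - \<gamma>)\<^sup>2 \<le> 1" using assms by (intro power_le_one) auto
  ultimately have "0 < (1 + \<gamma>) * (3 - \<gamma>)" "(1 + \<gamma>) * (3 - \<gamma>) \<le> 4"
    by auto
  then show ?thesis by (simp add: poa_bound_def)
qed

lemma poa_bound_1 [simp]: "poa_bound 1 = 1"
  by (simp add: poa_bound_def)

lemma poa_bound_strict_antimono:
  assumes "0 \<le> x" "x < y" "y \<le> 1"
  shows "poa_bound y < poa_bound x"
proof -
  have eq: "(1 + z) * (3 - z) = 4 - (1 - z)\<^sup>2" for z :: real
    by (simp add: algebra_simps power2_eq_square)
  have "(1 - y)\<^sup>2 < (1 - x)\<^sup>2" using assms by (intro power_strict_mono) auto
  moreover have "(1 - x)\<^sup>2 \<le> 1" using assms by (intro power_le_one) auto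
  ultimately show ?thesis
    unfolding poa_bound_def eq by (intro divide_strict_left_mono) auto
qed

lemma poa_bound_eq: "poa_bound \<gamma> = 4 / (3 + 2 * \<gamma> - \<gamma>\<^sup>2)"
  by (simp add: poa_bound_def algebra_simps power2_eq_square)

lemma poa_bound_edge_inequality:
  assumes "0 \<le> a" "0 \<le> b" "0 \<le> F" "0 \<le> \<gamma>" "\<gamma> \<le> 1"
  shows "F * (a * F + b) - poa_bound \<gamma> * (H * (a * H + b))
    \<le> poa_bound \<gamma> * ((a * (1 + \<gamma>) * F + b) * F - (a * (1 + \<gamma>) * F + b) * H)"
proof -
  have pos: "0 < (1 + \<gamma>) * (3 - \<gamma>)" using assms by simp
  have "poa_bound \<gamma> * ((a * (1 + \<gamma>) * F + b) * F - (a * (1 + \<gamma>) * F + b) * H)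
      - (F * (a * F + b) - poa_bound \<gamma> * (H * (a * H + b)))
      = a * ((1 + \<gamma>) * F - 2 * H)\<^sup>2 / ((1 + \<gamma>) * (3 - \<gamma>)) + b * (poa_bound \<gamma> - 1) * F"
    using pos by (simp add: poa_bound_def field_simps power2_eq_square)
  moreover have "0 \<le> a * ((1 + \<gamma>) * F - 2 * H)\<^sup>2 / ((1 + \<gamma>) * (3 - \<gamma>))"
    using assms pos by simp
  moreover have "0 \<le> b * (poa_bound \<gamma> - 1) * F"
    using assms poa_bound_ge_1 by simp
  ultimately show ?thesis by linarith
qed

lemma affine_coefficients:
  assumes "G \<in> G_aff"
  obtains A B where "\<forall>e\<in>edges G. 0 \<le> A e \<and> 0 \<le> B e \<and> lat G e = (\<lambda>x. A e * x + B e)"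
proof -
  have "\<forall>e\<in>edges G. \<exists>a b. 0 \<le> a \<and> 0 \<le> b \<and> lat G e = (\<lambda>x. a * x + b)"
    using assms by (auto simp: G_aff_def affine_rp_def affine_lats_def)
  then show ?thesis using that by metis
qed

lemma total_latency_nonneg:
  assumes "G \<in> G_aff" "feasible G f"
  shows "0 \<le> total_latency G f"
proof -
  obtain A B where "\<forall>e\<in>edges G. 0 \<le> A e \<and> 0 \<le> B e \<and> lat G e = (\<lambda>x. A e * x + B e)"
    using affine_coefficients[OF assms(1)] .
  then show ?thesis
    unfolding total_latency_def using edge_flow_nonneg[OF assms(2)] by (auto intro!: sum_nonneg)
qed

lemma nash_latency_le_poa_bound:
  assumes fin: "finite (edges G)" and s: "0 < s" and \<gamma>: "0 \<le> \<gamma>" "\<gamma> \<le> 1"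
    and AB: "\<forall>e\<in>edges G. 0 \<le> A e \<and> 0 \<le> B e \<and> lat G e = (\<lambda>x. A e * x + B e)"
    and cost: "\<forall>e\<in>edges G. \<forall>x. lat G e x + T (lat G e) x = s * (A e * (1 + \<gamma>) * x + B e)"
    and N: "nash G T f" and g: "feasible G g"
  shows "total_latency G f \<le> poa_bound \<gamma> * total_latency G g"
proof -
  define F where "F e = edge_flow G f e" for e
  define H where "H e = edge_flow G g e" for e
  define c where "c e = edge_cost G T f e" for e
  have F: "0 \<le> F e" for e
    using N by (simp add: F_def nash_def edge_flow_nonneg)
  have c: "c e = s * (A e * (1 + \<gamma>) * F e + B e)" if "e \<in> edges G" for e
    using cost that by (simp add: c_def F_def edge_cost_def)
  have edge: "F e * lat G e (F e) - poa_bound \<gamma> * (H e * lat G e (H e))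
      \<le> poa_bound \<gamma> / s * (c e * F e - c e * H e)" if e: "e \<in> edges G" for e
  proof -
    have "poa_bound \<gamma> / s * (c e * F e - c e * H e)
        = poa_bound \<gamma> * ((A e * (1 + \<gamma>) * F e + B e) * F e - (A e * (1 + \<gamma>) * F e + B e) * H e)"
      using s by (simp add: c[OF e] field_simps)
    then show ?thesis
      using poa_bound_edge_inequality[of "A e" "B e" "F e" \<gamma> "H e"] AB e F \<gamma> by simp
  qed
  have "total_latency G f - poa_bound \<gamma> * total_latency G g
      = (\<Sum>e\<in>edges G. F e * lat G e (F e) - poa_bound \<gamma> * (H e * lat G e (H e)))"
    by (simp add: total_latency_def F_def H_def sum_subtractf sum_distrib_left)
  also have "\<dots> \<le> (\<Sum>e\<in>edges G. poa_bound \<gamma> / s * (c e * F e - c e * H e))"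
    using edge by (rule sum_mono)
  also have "\<dots> = poa_bound \<gamma> / s * ((\<Sum>e\<in>edges G. c e * F e) - (\<Sum>e\<in>edges G. c e * H e))"
    by (simp only: sum_distrib_left[symmetric] sum_subtractf)
  also have "\<dots> \<le> 0"
    using nash_variational_inequality[OF fin N g] s poa_bound_ge_1[OF \<gamma>]
    by (intro mult_nonneg_nonpos) (auto simp: c_def F_def H_def)
  finally show ?thesis by simp
qed

lemma feasible_exists:
  assumes "wf_rp G"
  shows "\<exists>f. feasible G f"
  using flow_polytope_nonempty[OF assms] unfolding flow_polytope_def by blast

lemma L_opt_nonneg:
  assumes "G \<in> G_aff"
  shows "0 \<le> L_opt G"
  unfolding L_opt_def using total_latency_nonneg[OF assms] feasible_exists assms
  by (intro cInf_greatest) (auto simp: G_aff_def)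

lemma L_opt_le_total_latency:
  assumes "G \<in> G_aff" "feasible G f"
  shows "L_opt G \<le> total_latency G f"
  unfolding L_opt_def using assms total_latency_nonneg[OF assms(1)]
  by (intro cInf_lower) (auto simp: bdd_below_def)

lemma ratio_le_of_nash_bound:
  assumes G: "G \<in> G_aff" and ex: "\<exists>f. nash G T f" and r: "1 \<le> r"
    and bound: "\<And>f g. nash G T f \<Longrightarrow> feasible G g \<Longrightarrow> total_latency G f \<le> r * total_latency G g"
  shows "ratio (L_nash G T) (L_opt G) \<le> ereal r"
proof -
  have nash_le: "total_latency G f \<le> r * L_opt G" if N: "nash G T f" for f
  proof -
    have "total_latency G f / r \<le> L_opt G"
      unfolding L_opt_def using feasible_exists G bound[OF N] r
      by (intro cInf_greatest) (auto simp: G_aff_def divide_le_eq mult.commute)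
    then show ?thesis using r by (simp add: divide_le_eq mult.commute)
  qed
  have nash_ge: "0 \<le> total_latency G f" if "nash G T f" for f
    using total_latency_nonneg[OF G] that by (simp add: nash_def)
  have L_nash: "L_nash G T = (SUP f\<in>{f. nash G T f}. ereal (total_latency G f))"
    using ex by (auto simp: L_nash_def)
  have upper: "L_nash G T \<le> ereal (r * L_opt G)"
    unfolding L_nash by (rule SUP_least) (simp add: nash_le)
  obtain f where N: "nash G T f" using ex by blast
  have "ereal 0 \<le> L_nash G T"
    unfolding L_nash using N nash_ge[OF N] by (intro SUP_upper2) auto
  with upper obtain v where v: "L_nash G T = ereal v" "0 \<le> v" "v \<le> r * L_opt G"
    by (cases "L_nash G T") auto
  show ?thesis
  proof (cases "L_opt G = 0")
    case True
    then show ?thesis using v r by (simp add: ratio_def)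
  next
    case False
    then have "0 < L_opt G" using L_opt_nonneg[OF G] by simp
    then show ?thesis using v by (simp add: ratio_def divide_le_eq mult.commute)
  qed
qed

lemma ratio_ge_1:
  assumes G: "G \<in> G_aff" and pos: "0 < L_opt G"
  shows "1 \<le> ratio (L_nash G T) (L_opt G)"
proof (cases "{f. nash G T f} = {}")
  case True
  then show ?thesis using pos by (simp add: ratio_def L_nash_def)
next
  case False
  then obtain f where N: "nash G T f" by auto
  then have "ereal (L_opt G) \<le> ereal (total_latency G f)"
    using L_opt_le_total_latency[OF G] by (simp add: nash_def)
  also have "\<dots> \<le> L_nash G T"
    unfolding L_nash_def using False N by (auto intro: SUP_upper)
  finally have ge: "ereal (L_opt G) \<le> L_nash G T" .
  then show ?thesis
    using pos by (cases "L_nash G T") (auto simp: ratio_def)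
qed

theorem PoA_le_poa_bound:
  assumes s: "0 < s" and \<gamma>: "0 \<le> \<gamma>" "\<gamma> \<le> 1"
    and cost: "\<And>a b x. 0 \<le> a \<Longrightarrow> 0 \<le> b \<Longrightarrow> a * x + b + T (\<lambda>x. a * x + b) x = s * (a * (1 + \<gamma>) * x + b)"
  shows "PoA G_aff T \<le> ereal (poa_bound \<gamma>)"
  unfolding PoA_def
proof (rule SUP_least)
  fix G assume G: "G \<in> G_aff"
  then have wf: "wf_rp G" by (simp add: G_aff_def)
  obtain A B where AB: "\<forall>e\<in>edges G. 0 \<le> A e \<and> 0 \<le> B e \<and> lat G e = (\<lambda>x. A e * x + B e)"
    using affine_coefficients[OF G] .
  then have cost_G: "\<forall>e\<in>edges G. \<forall>x. lat G e x + T (lat G e) x = s * (A e * (1 + \<gamma>) * x + B e)"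
    using cost by simp
  have "\<forall>e\<in>edges G. 0 \<le> s * A e * (1 + \<gamma>)
      \<and> (\<forall>x. lat G e x + T (lat G e) x = s * A e * (1 + \<gamma>) * x + s * B e)"
    using AB cost_G s \<gamma> by (simp add: algebra_simps)
  then have "\<exists>f. nash G T f" by (rule nash_exists[OF wf])
  then show "ratio (L_nash G T) (L_opt G) \<le> ereal (poa_bound \<gamma>)"
    using ratio_le_of_nash_bound[OF G _ poa_bound_ge_1[OF \<gamma>]]
      nash_latency_le_poa_bound[OF _ s \<gamma> AB cost_G] wf
    by (auto simp: wf_rp_def)
qed

section \<open>The Pigou network\<close>

definition pigou :: "real \<Rightarrow> routing_problem" where
  "pigou \<gamma> = \<lparr>edges = {0, 1}, src = (\<lambda>_. 0), dst = (\<lambda>_. 1), ncom = 1, orig = (\<lambda>_. 0),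
     dest = (\<lambda>_. 1), rate = (\<lambda>_. 1), lat = (\<lambda>e. if e = 0 then (\<lambda>x. x) else (\<lambda>x. 1 + \<gamma>))\<rparr>"

lemma pigou_simps [simp]:
  "edges (pigou \<gamma>) = {0, 1}" "src (pigou \<gamma>) e = 0" "dst (pigou \<gamma>) e = 1" "ncom (pigou \<gamma>) = 1"
  "orig (pigou \<gamma>) i = 0" "dest (pigou \<gamma>) i = 1" "rate (pigou \<gamma>) i = 1"
  "lat (pigou \<gamma>) e = (if e = 0 then (\<lambda>x. x) else (\<lambda>x. 1 + \<gamma>))"
  by (simp_all add: pigou_def)

lemma paths_pigou [simp]: "paths (pigou \<gamma>) i = {[0], [1]}"
proof -
  have "Defs.simple_path (pigou \<gamma>) 0 1 P \<longleftrightarrow> P = [0] \<or> P = [1]" for P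
    by (cases P rule: remdups_adj.cases) (auto simp: Defs.simple_path_def)
  then show ?thesis by (auto simp: paths_def)
qed

lemma edge_flow_pigou [simp]:
  "edge_flow (pigou \<gamma>) f 0 = f 0 [0]" "edge_flow (pigou \<gamma>) f (Suc 0) = f 0 [1]"
proof -
  have "{P \<in> paths (pigou \<gamma>) 0. 0 \<in> set P} = {[0]}" "{P \<in> paths (pigou \<gamma>) 0. Suc 0 \<in> set P} = {[1]}"
    by auto
  then show "edge_flow (pigou \<gamma>) f 0 = f 0 [0]" "edge_flow (pigou \<gamma>) f (Suc 0) = f 0 [1]"
    by (simp_all add: edge_flow_def del: paths_pigou)
qed

lemma total_latency_pigou: "total_latency (pigou \<gamma>) f = f 0 [0] * f 0 [0] + f 0 [1] * (1 + \<gamma>)"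
  by (simp add: total_latency_def)

lemma id_in_affine_lats: "(\<lambda>x. x) \<in> affine_lats"
  unfolding affine_lats_def by (intro CollectI exI[of _ 1] exI[of _ 0]) auto

lemma const_in_affine_lats: "0 \<le> c \<Longrightarrow> (\<lambda>x. c) \<in> affine_lats"
  unfolding affine_lats_def by (intro CollectI exI[of _ 0] exI[of _ c]) auto

lemma pigou_in_G_aff: "0 \<le> \<gamma> \<Longrightarrow> pigou \<gamma> \<in> G_aff"
  using id_in_affine_lats const_in_affine_lats[of "1 + \<gamma>"]
  by (auto simp: G_aff_def wf_rp_def affine_rp_def)

lemma L_opt_pigou:
  assumes "0 \<le> \<gamma>" "\<gamma> \<le> 1"
  shows "L_opt (pigou \<gamma>) = (1 + \<gamma>) * (3 - \<gamma>) / 4"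
  unfolding L_opt_def
proof (rule cInf_eq_minimum)
  define g where "g = (\<lambda>(i::nat) P. if P = [0::nat] then (1 + \<gamma>) / 2 else if P = [1] then (1 - \<gamma>) / 2 else 0)"
  have "feasible (pigou \<gamma>) g" "total_latency (pigou \<gamma>) g = (1 + \<gamma>) * (3 - \<gamma>) / 4"
    using assms by (auto simp: feasible_def g_def total_latency_pigou field_simps)
  then show "(1 + \<gamma>) * (3 - \<gamma>) / 4 \<in> total_latency (pigou \<gamma>) ` {f. feasible (pigou \<gamma>) f}"
    by force
next
  fix x assume "x \<in> total_latency (pigou \<gamma>) ` {f. feasible (pigou \<gamma>) f}"
  then obtain f where "feasible (pigou \<gamma>) f" and x: "x = total_latency (pigou \<gamma>) f" by auto
  then have rest: "f 0 [1] = 1 - f 0 [0]" by (simp add: feasible_def)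
  have "x - (1 + \<gamma>) * (3 - \<gamma>) / 4 = (f 0 [0] - (1 + \<gamma>) / 2)\<^sup>2"
    unfolding x total_latency_pigou rest by (simp add: field_simps power2_eq_square)
  then show "(1 + \<gamma>) * (3 - \<gamma>) / 4 \<le> x" by (metis diff_ge_0_iff_ge zero_le_power2)
qed

text \<open>The hypothesis says that sending all traffic over the edge with latency \<open>x\<close> is a Nash
  flow of the Pigou network; its latency is \<open>1\<close>, while the optimum is \<open>1 / poa_bound \<gamma>\<close>.\<close>

theorem PoA_ge_poa_bound:
  assumes \<gamma>: "0 \<le> \<gamma>" "\<gamma> \<le> 1" and T: "T (\<lambda>x. x) 1 \<le> \<gamma> + T (\<lambda>x. 1 + \<gamma>) 0"
  shows "ereal (poa_bound \<gamma>) \<le> PoA G_aff T"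
proof -
  define f where "f = (\<lambda>(i::nat) P. if P = [0::nat] then 1 else 0 :: real)"
  have "nash (pigou \<gamma>) T f"
    using T by (auto simp: nash_def feasible_def path_cost_def f_def)
  moreover have "total_latency (pigou \<gamma>) f = 1"
    by (simp add: total_latency_pigou f_def)
  ultimately have "ereal 1 \<le> L_nash (pigou \<gamma>) T"
    unfolding L_nash_def by (auto intro: SUP_upper2)
  moreover have "0 < L_opt (pigou \<gamma>)" "poa_bound \<gamma> = 1 / L_opt (pigou \<gamma>)"
    unfolding L_opt_pigou[OF \<gamma>] poa_bound_def using \<gamma> by simp_all
  ultimately have "ereal (poa_bound \<gamma>) \<le> ratio (L_nash (pigou \<gamma>) T) (L_opt (pigou \<gamma>))"
    by (cases "L_nash (pigou \<gamma>) T") (auto simp: ratio_def divide_right_mono)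
  also have "\<dots> \<le> PoA G_aff T"
    unfolding PoA_def using pigou_in_G_aff[OF \<gamma>(1)] by (rule SUP_upper)
  finally show ?thesis .
qed

lemma PoA_ge_1: "1 \<le> PoA G_aff T"
proof -
  have "1 \<le> ratio (L_nash (pigou 0) T) (L_opt (pigou 0))"
    using ratio_ge_1[OF pigou_in_G_aff] L_opt_pigou[of 0] by simp
  also have "\<dots> \<le> PoA G_aff T"
    unfolding PoA_def using pigou_in_G_aff[of 0] by (intro SUP_upper) auto
  finally show ?thesis .
qed

section \<open>Optimal tolls and subsidies\<close>

corollary PoA_eq_poa_bound:
  assumes "0 < s" "0 \<le> \<gamma>" "\<gamma> \<le> 1"
    and "\<And>a b x. 0 \<le> a \<Longrightarrow> 0 \<le> b \<Longrightarrow> a * x + b + T (\<lambda>x. a * x + b) x = s * (a * (1 + \<gamma>) * x + b)"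
    and "T (\<lambda>x. x) 1 \<le> \<gamma> + T (\<lambda>x. 1 + \<gamma>) 0"
  shows "PoA G_aff T = ereal (poa_bound \<gamma>)"
  using PoA_le_poa_bound[OF assms(1-4)] PoA_ge_poa_bound[of \<gamma> T, OF assms(2,3,5)] by (rule antisym)

lemma PoA_T_opt_plus:
  assumes "0 \<le> \<beta>"
  shows "PoA G_aff (T_opt_plus \<beta>) = ereal (poa_bound (min \<beta> 1))"
  by (rule PoA_eq_poa_bound[where s = 1]) (use assms in \<open>auto simp: T_opt_plus_def algebra_simps\<close>)

lemma tolling_bounded_T_opt_plus:
  assumes "0 \<le> \<beta>"
  shows "tolling_bounded \<beta> (T_opt_plus \<beta>)"
  unfolding tolling_bounded_def affine_lats_def
proof clarsimp
  fix a b x :: real assume "0 \<le> a" "0 \<le> b" "0 \<le> x" "x \<le> 1"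
  moreover have "a * x \<le> \<beta> * (a * x + b)" if "1 \<le> \<beta>"
    using mult_mono[OF that, of "a * x" "a * x + b"] calculation assms by simp
  ultimately show "0 \<le> T_opt_plus \<beta> (\<lambda>x. a * x + b) x \<and> T_opt_plus \<beta> (\<lambda>x. a * x + b) x \<le> \<beta> * (a * x + b)"
    using assms by (auto simp: T_opt_plus_def algebra_simps)
qed

lemma PoA_ge_of_tolling_bounded:
  assumes T: "tolling_bounded \<beta> T" and "0 \<le> \<beta>" "\<beta> < 1"
  shows "ereal (poa_bound \<beta>) \<le> PoA G_aff T"
proof (rule PoA_ge_poa_bound)
  have bounds: "0 \<le> T l x \<and> T l x \<le> \<beta> * l x" if "l \<in> affine_lats" "x \<in> {0..1}" for l x
    using T that unfolding tolling_bounded_def by blast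
  have "T (\<lambda>x. x) 1 \<le> \<beta>" and "0 \<le> T (\<lambda>x. 1 + \<beta>) 0"
    using bounds[OF id_in_affine_lats, of 1] bounds[OF const_in_affine_lats[of "1 + \<beta>"], of 0] assms(2)
    by auto
  then show "T (\<lambda>x. x) 1 \<le> \<beta> + T (\<lambda>x. 1 + \<beta>) 0" by simp
qed (use assms in auto)

theorem optimal_tolling_T_opt_plus:
  assumes "0 \<le> \<beta>"
  shows "optimal_tolling \<beta> (T_opt_plus \<beta>)"
  unfolding optimal_tolling_def
proof (intro conjI allI impI)
  show "tolling_bounded \<beta> (T_opt_plus \<beta>)" using tolling_bounded_T_opt_plus[OF assms] .
  fix T assume "tolling_bounded \<beta> T"
  then show "PoA G_aff (T_opt_plus \<beta>) \<le> PoA G_aff T"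
    using PoA_T_opt_plus[OF assms] PoA_ge_of_tolling_bounded[of \<beta> T] PoA_ge_1[of T] assms
    by (cases "\<beta> < 1") (auto simp: one_ereal_def)
qed

lemma PoA_T_opt_minus:
  assumes "0 \<le> \<beta>"
  shows "PoA G_aff (T_opt_minus \<beta>) = ereal (poa_bound (if \<beta> < 1/2 then 1 / (1 - \<beta>) - 1 else 1))"
proof (cases "\<beta> < 1/2")
  case True
  then show ?thesis
    by (intro PoA_eq_poa_bound[where s = "1 - \<beta>"]) (use assms in \<open>auto simp: T_opt_minus_def field_simps\<close>)
next
  case False
  then show ?thesis
    by (intro PoA_eq_poa_bound[where s = "1/2"]) (auto simp: T_opt_minus_def field_simps)
qed

lemma subsidy_bounded_T_opt_minus:
  assumes "0 \<le> \<beta>"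
  shows "subsidy_bounded \<beta> (T_opt_minus \<beta>)"
  unfolding subsidy_bounded_def affine_lats_def
proof clarsimp
  fix a b x :: real assume "0 \<le> a" "0 \<le> b" "0 \<le> x" "x \<le> 1"
  moreover have "b / 2 \<le> \<beta> * (a * x + b)" if "1/2 \<le> \<beta>"
    using mult_mono[OF that, of b "a * x + b"] calculation assms by simp
  ultimately show "- (\<beta> * (a * x + b)) \<le> T_opt_minus \<beta> (\<lambda>x. a * x + b) x
      \<and> T_opt_minus \<beta> (\<lambda>x. a * x + b) x \<le> 0"
    using assms by (auto simp: T_opt_minus_def algebra_simps)
qed

lemma PoA_ge_of_subsidy_bounded:
  assumes T: "subsidy_bounded \<beta> T" and "0 \<le> \<beta>" "\<beta> < 1/2"
  shows "ereal (poa_bound (1 / (1 - \<beta>) - 1)) \<le> PoA G_aff T"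
proof (rule PoA_ge_poa_bound)
  define \<gamma> where "\<gamma> = 1 / (1 - \<beta>) - 1"
  have bounds: "- \<beta> * l x \<le> T l x \<and> T l x \<le> 0" if "l \<in> affine_lats" "x \<in> {0..1}" for l x
    using T that unfolding subsidy_bounded_def by blast
  have "0 \<le> \<gamma>" "\<beta> * (1 + \<gamma>) = \<gamma>" using assms by (simp_all add: \<gamma>_def field_simps)
  moreover have "T (\<lambda>x. x) 1 \<le> 0" and "- \<beta> * (1 + \<gamma>) \<le> T (\<lambda>x. 1 + \<gamma>) 0"
    using bounds[OF id_in_affine_lats, of 1] bounds[OF const_in_affine_lats[of "1 + \<gamma>"], of 0]
      calculation(1) by auto
  ultimately show "T (\<lambda>x. x) 1 \<le> \<gamma> + T (\<lambda>x. 1 + \<gamma>) 0" by simp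
qed (use assms in \<open>auto simp: field_simps\<close>)

theorem optimal_subsidy_T_opt_minus:
  assumes "0 \<le> \<beta>"
  shows "optimal_subsidy \<beta> (T_opt_minus \<beta>)"
  unfolding optimal_subsidy_def
proof (intro conjI allI impI)
  show "subsidy_bounded \<beta> (T_opt_minus \<beta>)" using subsidy_bounded_T_opt_minus[OF assms] .
  fix T assume "subsidy_bounded \<beta> T"
  then show "PoA G_aff (T_opt_minus \<beta>) \<le> PoA G_aff T"
    using PoA_T_opt_minus[OF assms] PoA_ge_of_subsidy_bounded[of \<beta> T] PoA_ge_1[of T] assms
    by (cases "\<beta> < 1/2") (auto simp: one_ereal_def)
qed

theorem proposition1:
  shows "(\<forall>\<beta>::real. \<beta> \<ge> 0 \<longrightarrow>
            optimal_tolling \<beta> (T_opt_plus \<beta>) \<and>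
            PoA G_aff (T_opt_plus \<beta>) =
              ereal (if \<beta> < 1 then 4 / (3 + 2 * \<beta> - \<beta>^2) else 1) \<and>
            optimal_subsidy \<beta> (T_opt_minus \<beta>) \<and>
            PoA G_aff (T_opt_minus \<beta>) =
              ereal (if \<beta> < 1/2
                     then (let \<beta>h = 1 / (1 - \<beta>) - 1 in 4 / (3 + 2 * \<beta>h - \<beta>h^2))
                     else 1))
       \<and> (\<forall>\<beta>::real. 0 < \<beta> \<and> \<beta> < 1 \<longrightarrow>
            PoA G_aff (T_opt_plus \<beta>) > PoA G_aff (T_opt_minus \<beta>))"
proof (intro conjI allI impI)
  fix \<beta> :: real assume "0 \<le> \<beta>"
  then show "optimal_tolling \<beta> (T_opt_plus \<beta>)" "optimal_subsidy \<beta> (T_opt_minus \<beta>)"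
    and "PoA G_aff (T_opt_plus \<beta>) = ereal (if \<beta> < 1 then 4 / (3 + 2 * \<beta> - \<beta>^2) else 1)"
    and "PoA G_aff (T_opt_minus \<beta>) = ereal (if \<beta> < 1/2
          then (let \<beta>h = 1 / (1 - \<beta>) - 1 in 4 / (3 + 2 * \<beta>h - \<beta>h^2)) else 1)"
    by (simp_all add: optimal_tolling_T_opt_plus optimal_subsidy_T_opt_minus PoA_T_opt_plus
        PoA_T_opt_minus poa_bound_eq min_def Let_def)
next
  fix \<beta> :: real assume \<beta>: "0 < \<beta> \<and> \<beta> < 1"
  define \<gamma> where "\<gamma> = (if \<beta> < 1/2 then 1 / (1 - \<beta>) - 1 else 1)"
  have "\<beta> < \<gamma>" "\<gamma> \<le> 1" using \<beta> by (auto simp: \<gamma>_def field_simps)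
  then have "poa_bound \<gamma> < poa_bound \<beta>" using \<beta> by (intro poa_bound_strict_antimono) auto
  then show "PoA G_aff (T_opt_plus \<beta>) > PoA G_aff (T_opt_minus \<beta>)"
    using \<beta> by (simp add: PoA_T_opt_plus PoA_T_opt_minus \<gamma>_def)
qed

end
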